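(* Let $q$ be a prime power, let $n$ be an even positive integer, and let $Z$ be a set of $q^n$ matrices over $\mathbb{F}_{q^2}$ of size $n/2\times n/2$ with the property that $A-B$ is nonsingular for all distinct $A,B\in Z$. Let \[ Y=\left\{\begin{pmatrix} I & A^*\\ A & AA^*\end{pmatrix}:A\in Z\right\}\cup\left\{\begin{pmatrix} O & O\\ O & I\end{pmatrix}\right\}, \] where $O$ and $I$ are the zero and identity matrices of size $n/2\times n/2$. Then $Y$ is an $n$-code in $X(n,q)$ of size $q^n+1$.
   Context: For a matrix $A$ over $\mathbb{F}_{q^2}$, $A^*$ denotes the transpose of the matrix obtained by applying $x\mapsto x^q$ to each entry. $X(n,q)$ is the set of $n\times n$ matrices $A$ over $\mathbb{F}_{q^2}$ with $A^*=A$ (Hermitian matrices). A nonempty subset $Y\subseteq X(n,q)$ is a $d$-code if $\operatorname{rank}(A-B)\ge d$ for all distinct $A,B\in Y$. *)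

theory Defs
  imports "Jordan_Normal_Form.DL_Rank" "HOL-Computational_Algebra.Primes"
begin

text \<open>The field F_{q^2} is modelled by a finite field type 'a with CARD('a) = q^2.
  A^* is the transpose of the entrywise q-th power (Frobenius) of A.\<close>

definition mat_star :: "nat \<Rightarrow> 'a::field mat \<Rightarrow> 'a mat" where
  "mat_star q A = transpose_mat (map_mat (\<lambda>x. x ^ q) A)"

definition herm_X :: "nat \<Rightarrow> nat \<Rightarrow> 'a::field mat set" where
  "herm_X n q = {A \<in> carrier_mat n n. mat_star q A = A}"

definition is_d_code :: "nat \<Rightarrow> nat \<Rightarrow> nat \<Rightarrow> 'a::field mat set \<Rightarrow> bool" where
  "is_d_code n q d Y \<longleftrightarrow> Y \<noteq> {} \<and> Y \<subseteq> herm_X n q \<and>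
     (\<forall>A\<in>Y. \<forall>B\<in>Y. A \<noteq> B \<longrightarrow> d \<le> vec_space.rank n (A - B))"

definition prime_power :: "nat \<Rightarrow> bool" where
  "prime_power q \<longleftrightarrow> (\<exists>p k. prime p \<and> 0 < k \<and> q = p ^ k)"

end

theory Submission
  imports Defs "HOL-Number_Theory.Residues"
begin

text \<open>For A in Z write M(A) = [I; A] [I, A^*]; it is Hermitian because x \<mapsto> x^q is an
  involutive automorphism of F_{q^2}. For distinct A, B the difference M(A) - M(B) has block form
  [0, C^*; C, X] with C = A - B, so up to sign its determinant is det(C)^(q+1) \<noteq> 0, and
  M(A) minus the extra point [0, 0; 0, I] has Schur complement -I with respect to its upper left
  block I. So distinct elements of Y differ by matrices of full rank n; and since A is the lower
  left block of M(A), the map A \<mapsto> M(A) is injective, giving |Y| = |Z| + 1.\<close>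

lemma finite_field_power_card_minus_one:
  fixes x :: "'a::{finite,field}"
  assumes "x \<noteq> 0"
  shows "x ^ (card (UNIV :: 'a set) - 1) = 1"
proof -
  let ?U = "UNIV - {0::'a}"
  have card_U: "card ?U = card (UNIV :: 'a set) - 1"
    by (simp add: card_Diff_singleton)
  have "x ^ (card (UNIV :: 'a set) - 1) * (\<Prod>y\<in>?U. y) = (\<Prod>y\<in>?U. x * y)"
    by (simp add: prod.distrib card_U)
  also have "\<dots> = (\<Prod>y\<in>?U. y)"
    by (rule prod.reindex_bij_witness[of _ "\<lambda>y. y / x" "\<lambda>y. x * y"]) (use assms in auto)
  finally show ?thesis
    by simp
qed

lemma finite_field_power_card:
  fixes x :: "'a::{finite,field}"
  shows "x ^ card (UNIV :: 'a set) = x"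
proof (cases "x = 0")
  case False
  have "x ^ card (UNIV :: 'a set) = x * x ^ (card (UNIV :: 'a set) - 1)"
    using finite_UNIV_card_ge_0[where 'a = 'a] by (simp flip: power_Suc)
  with finite_field_power_card_minus_one[OF False] show ?thesis
    by simp
qed (simp add: finite_UNIV_card_ge_0)

lemma CHAR_eq_prime_of_card:
  assumes "prime p" and "card (UNIV :: 'a::{finite,field} set) = p ^ j"
  shows "CHAR('a) = p"
proof -
  have "prime CHAR('a)"
    by (simp add: prime_CHAR_semidom finite_imp_CHAR_pos)
  moreover have "CHAR('a) dvd p ^ j"
    using CHAR_dvd_CARD[where 'a = 'a] assms(2) by simp
  ultimately show ?thesis
    using assms(1) prime_dvd_power primes_dvd_imp_eq by blast
qed

lemma split_block_four_block_mat:
  assumes "A \<in> carrier_mat n1 m1" "B \<in> carrier_mat n1 m2"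
    "C \<in> carrier_mat n2 m1" "D \<in> carrier_mat n2 m2"
  shows "split_block (four_block_mat A B C D) n1 m1 = (A, B, C, D)"
  using assms by (auto simp: split_block_def Let_def intro!: eq_matI)

lemma det_four_block_mat_one_upper_left:
  fixes B C D :: "'a::idom mat"
  assumes B: "B \<in> carrier_mat m n" and C: "C \<in> carrier_mat n m" and D: "D \<in> carrier_mat n n"
  shows "det (four_block_mat (1\<^sub>m m) B C D) = det (D - C * B)"
proof -
  define L where "L = four_block_mat (1\<^sub>m m) (0\<^sub>m m n) (- C) (1\<^sub>m n)"
  have L: "L \<in> carrier_mat (m + n) (m + n)"
    using C by (simp add: L_def)
  have M: "four_block_mat (1\<^sub>m m) B C D \<in> carrier_mat (m + n) (m + n)"
    using B C D by simp
  have "L * four_block_mat (1\<^sub>m m) B C D = four_block_mat (1\<^sub>m m) B (0\<^sub>m n m) (D - C * B)"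
    unfolding L_def using B C D
    by (subst mult_four_block_mat[of _ m m _ n _ n _ _ m _ n]) (auto intro!: eq_matI)
  moreover have "det L = 1"
    unfolding L_def using C by (subst det_four_block_mat_upper_right_zero[of _ m]) auto
  ultimately have "det (four_block_mat (1\<^sub>m m) B C D) = det (four_block_mat (1\<^sub>m m) B (0\<^sub>m n m) (D - C * B))"
    by (metis det_mult[OF L M] mult_1)
  also have "\<dots> = det (D - C * B)"
    using B C D by (subst det_four_block_mat_lower_left_zero[of _ m _ n]) auto
  finally show ?thesis .
qed

text \<open>Swapping the two block columns costs the sign (-1)^m, which the square hides.\<close>

lemma det_four_block_mat_zero_upper_left:
  fixes B C D :: "'a::idom mat"
  assumes B: "B \<in> carrier_mat m m" and C: "C \<in> carrier_mat m m" and D: "D \<in> carrier_mat m m"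
  shows "det (four_block_mat (0\<^sub>m m m) B C D) ^ 2 = (det B * det C) ^ 2"
proof -
  define P :: "'a mat" where "P = four_block_mat (0\<^sub>m m m) (1\<^sub>m m) (1\<^sub>m m) (0\<^sub>m m m)"
  have P: "P \<in> carrier_mat (m + m) (m + m)"
    by (simp add: P_def)
  have M: "four_block_mat (0\<^sub>m m m) B C D \<in> carrier_mat (m + m) (m + m)"
    using B C D by simp
  have "P * P = 1\<^sub>m (m + m)"
    unfolding P_def by (subst mult_four_block_mat[of _ m m _ m _ m _ _ m _ m]) auto
  then have "det P ^ 2 = 1"
    using det_mult[OF P P] by (simp add: power2_eq_square)
  have "four_block_mat (0\<^sub>m m m) B C D * P = four_block_mat B (0\<^sub>m m m) D C"
    unfolding P_def using B C D by (subst mult_four_block_mat[of _ m m _ m _ m _ _ m _ m]) auto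
  then have "det (four_block_mat (0\<^sub>m m m) B C D) * det P = det B * det C"
    using B C D det_mult[OF M P] by (simp add: det_four_block_mat_upper_right_zero)
  then show ?thesis
    using \<open>det P ^ 2 = 1\<close> by (metis mult_1_right power_mult_distrib)
qed

lemma minus_four_block_mat:
  assumes "A1 \<in> carrier_mat n1 m1" "B1 \<in> carrier_mat n1 m2" "C1 \<in> carrier_mat n2 m1" "D1 \<in> carrier_mat n2 m2"
    "A2 \<in> carrier_mat n1 m1" "B2 \<in> carrier_mat n1 m2" "C2 \<in> carrier_mat n2 m1" "D2 \<in> carrier_mat n2 m2"
  shows "four_block_mat A1 B1 C1 (D1 :: 'a::ab_group_add mat) - four_block_mat A2 B2 C2 D2 =
    four_block_mat (A1 - A2) (B1 - B2) (C1 - C2) (D1 - D2)"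
  by (rule eq_matI) (use assms in auto)

lemma minus_mat_eq_uminus_minus:
  assumes "A \<in> carrier_mat n m" and "B \<in> carrier_mat n m"
  shows "(A :: 'a::ab_group_add mat) - B = - (B - A)"
  by (rule eq_matI) (use assms in auto)

lemma minus_zero_mat: "A \<in> carrier_mat n m \<Longrightarrow> (A :: 'a::group_add mat) - 0\<^sub>m n m = A"
  by (rule eq_matI) auto

lemma minus_one_minus_self_mat: "A \<in> carrier_mat n n \<Longrightarrow> (A :: 'a::ring_1 mat) - 1\<^sub>m n - A = - 1\<^sub>m n"
  by (rule eq_matI) auto

lemma det_uminus_one_mat: "det (- 1\<^sub>m n :: 'a::comm_ring_1 mat) = (- 1) ^ n"
proof -
  have "- 1\<^sub>m n = (- 1 :: 'a) \<cdot>\<^sub>m 1\<^sub>m n"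
    by (rule eq_matI) auto
  then show ?thesis
    by simp
qed

lemma mat_star_carrier: "A \<in> carrier_mat n m \<Longrightarrow> mat_star q (A :: 'a::field mat) \<in> carrier_mat m n"
  by (simp add: mat_star_def)

lemma mat_star_four_block_mat:
  assumes "A \<in> carrier_mat n1 m1" "B \<in> carrier_mat n1 m2"
    "C \<in> carrier_mat n2 m1" "D \<in> carrier_mat n2 m2"
  shows "mat_star q (four_block_mat A B C (D :: 'a::field mat)) =
    four_block_mat (mat_star q A) (mat_star q C) (mat_star q B) (mat_star q D)"
  unfolding mat_star_def
  using assms by (subst map_four_block_mat[OF assms], subst transpose_four_block_mat) auto

locale frobenius_involution =
  comm_ring_hom "\<lambda>x::'a::field. x ^ q" for field :: "'a::field itself" and q :: nat +
  assumes power_power_eq_self: "(x ^ q) ^ q = (x :: 'a)"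

lemma frobenius_involution_if_card_eq_square:
  assumes "prime_power q" and card: "card (UNIV :: 'a::{finite,field} set) = q ^ 2"
  shows "frobenius_involution TYPE('a) q"
proof -
  obtain p k where p: "prime p" and q: "q = p ^ k"
    using assms(1) unfolding prime_power_def by auto
  have "CHAR('a) = p"
    using CHAR_eq_prime_of_card[OF p] card by (simp add: q power_mult[symmetric])
  then have add: "(x + y) ^ q = x ^ q + y ^ q" for x y :: 'a
    using freshmans_dream' p q by blast
  have "q > 0"
    using p q prime_gt_0_nat by simp
  show ?thesis
  proof unfold_locales
    show "(x ^ q) ^ q = x" for x :: 'a
      using finite_field_power_card[of x] card by (simp add: power_mult power2_eq_square)
  qed (use add \<open>q > 0\<close> in \<open>auto simp: power_mult_distrib\<close>)
qed

context frobenius_involution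
begin

lemma mat_star_mat_star [simp]: "mat_star q (mat_star q (A :: 'a mat)) = A"
  by (rule eq_matI) (auto simp: mat_star_def power_power_eq_self)

lemma mat_star_mult:
  assumes "A \<in> carrier_mat n k" and "B \<in> carrier_mat k m"
  shows "mat_star q ((A :: 'a mat) * B) = mat_star q B * mat_star q A"
  unfolding mat_star_def mat_hom_mult[OF assms]
  by (rule transpose_mult) (use assms in auto)

lemma mat_star_minus:
  assumes "A \<in> carrier_mat n m" and "B \<in> carrier_mat n m"
  shows "mat_star q ((A :: 'a mat) - B) = mat_star q A - mat_star q B"
  by (rule eq_matI) (use assms in \<open>auto simp: mat_star_def hom_minus\<close>)

lemma mat_star_one [simp]: "mat_star q (1\<^sub>m n :: 'a mat) = 1\<^sub>m n"
  by (rule eq_matI) (auto simp: mat_star_def)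

lemma mat_star_zero [simp]: "mat_star q (0\<^sub>m n m :: 'a mat) = 0\<^sub>m m n"
  by (rule eq_matI) (auto simp: mat_star_def)

lemma det_mat_star: "A \<in> carrier_mat n n \<Longrightarrow> det (mat_star q (A :: 'a mat)) = det A ^ q"
  unfolding mat_star_def by (subst det_transpose[of _ n]) auto

end

definition graph_mat :: "nat \<Rightarrow> nat \<Rightarrow> 'a::field mat \<Rightarrow> 'a mat" where
  "graph_mat q m A = four_block_mat (1\<^sub>m m) (mat_star q A) A (A * mat_star q A)"

definition infinity_mat :: "nat \<Rightarrow> 'a::field mat" where
  "infinity_mat m = four_block_mat (0\<^sub>m m m) (0\<^sub>m m m) (0\<^sub>m m m) (1\<^sub>m m)"

lemma graph_mat_carrier: "A \<in> carrier_mat m m \<Longrightarrow> graph_mat q m A \<in> carrier_mat (m + m) (m + m)"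
  by (simp add: graph_mat_def mat_star_carrier)

lemma infinity_mat_carrier: "infinity_mat m \<in> carrier_mat (m + m) (m + m)"
  by (simp add: infinity_mat_def)

lemma split_block_graph_mat:
  assumes "A \<in> carrier_mat m m"
  shows "split_block (graph_mat q m A) m m = (1\<^sub>m m, mat_star q A, A, A * mat_star q A)"
  unfolding graph_mat_def using assms mat_star_carrier[OF assms]
  by (intro split_block_four_block_mat[of _ m m _ m _ m]) auto

lemma inj_on_graph_mat: "inj_on (graph_mat q m) (carrier_mat m m)"
proof
  fix A B assume A: "A \<in> carrier_mat m m" and B: "B \<in> carrier_mat m m"
    and eq: "graph_mat q m A = graph_mat q m B"
  have "split_block (graph_mat q m A) m m = split_block (graph_mat q m B) m m"
    by (simp only: eq)
  then show "A = B"
    unfolding split_block_graph_mat[OF A] split_block_graph_mat[OF B] by simp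
qed

lemma graph_mat_neq_infinity_mat:
  assumes "0 < m"
  shows "graph_mat q m A \<noteq> infinity_mat m"
proof -
  have "graph_mat q m A $$ (0, 0) = 1"
    using assms by (simp add: graph_mat_def)
  moreover have "infinity_mat m $$ (0, 0) = 0"
    using assms by (simp add: infinity_mat_def)
  ultimately show ?thesis
    by (metis zero_neq_one)
qed

lemma card_graph_mats:
  assumes "finite Z" and "Z \<subseteq> carrier_mat m m" and "0 < m"
  shows "card (graph_mat q m ` Z \<union> {infinity_mat m}) = card Z + 1"
proof -
  have "infinity_mat m \<notin> graph_mat q m ` Z"
    using graph_mat_neq_infinity_mat[OF assms(3)] by (metis imageE)
  moreover have "inj_on (graph_mat q m) Z"
    using inj_on_graph_mat assms(2) by (rule inj_on_subset)
  ultimately show ?thesis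
    using assms(1) by (simp add: card_image)
qed

context frobenius_involution
begin

lemma graph_mat_hermitian:
  assumes "A \<in> carrier_mat m m"
  shows "mat_star q (graph_mat q m A :: 'a mat) = graph_mat q m A"
  unfolding graph_mat_def using assms
  by (subst mat_star_four_block_mat[of _ m m _ m _ m])
    (auto simp: mat_star_carrier mat_star_mult[of _ m m _ m])

lemma infinity_mat_hermitian: "mat_star q (infinity_mat m :: 'a mat) = infinity_mat m"
  unfolding infinity_mat_def by (subst mat_star_four_block_mat[of _ m m _ m _ m]) auto

lemma det_graph_mat_minus:
  assumes A: "A \<in> carrier_mat m m" and B: "B \<in> carrier_mat m m"
  shows "det (graph_mat q m A - graph_mat q m B :: 'a mat) ^ 2 = (det (A - B) ^ Suc q) ^ 2"
proof -
  have sA: "mat_star q A \<in> carrier_mat m m" and sB: "mat_star q B \<in> carrier_mat m m"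
    using A B by (simp_all add: mat_star_carrier)
  have AB: "A - B \<in> carrier_mat m m"
    using B by (rule minus_carrier_mat)
  have sAB: "mat_star q (A - B) \<in> carrier_mat m m"
    using AB by (rule mat_star_carrier)
  have X: "A * mat_star q A - B * mat_star q B \<in> carrier_mat m m"
    using B sB by (intro minus_carrier_mat mult_carrier_mat)
  have "graph_mat q m A - graph_mat q m B =
      four_block_mat (1\<^sub>m m - 1\<^sub>m m) (mat_star q A - mat_star q B) (A - B)
        (A * mat_star q A - B * mat_star q B)"
    unfolding graph_mat_def
    by (rule minus_four_block_mat) (use A B sA sB in \<open>auto intro: mult_carrier_mat\<close>)
  also have "\<dots> = four_block_mat (0\<^sub>m m m) (mat_star q (A - B)) (A - B)
        (A * mat_star q A - B * mat_star q B)"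
    by (simp add: mat_star_minus[OF A B] minus_r_inv_mat[OF one_carrier_mat])
  finally have "det (graph_mat q m A - graph_mat q m B) ^ 2 = (det (mat_star q (A - B)) * det (A - B)) ^ 2"
    using det_four_block_mat_zero_upper_left[OF sAB AB X] by simp
  then show ?thesis
    by (simp add: det_mat_star[OF AB] mult.commute)
qed

lemma det_graph_mat_minus_infinity_mat:
  assumes A: "A \<in> carrier_mat m m"
  shows "det (graph_mat q m A - infinity_mat m :: 'a mat) = (- 1) ^ m"
proof -
  have sA: "mat_star q A \<in> carrier_mat m m"
    using A by (rule mat_star_carrier)
  have AsA: "A * mat_star q A \<in> carrier_mat m m"
    using A sA by (rule mult_carrier_mat)
  have "graph_mat q m A - infinity_mat m =
      four_block_mat (1\<^sub>m m - 0\<^sub>m m m) (mat_star q A - 0\<^sub>m m m) (A - 0\<^sub>m m m)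
        (A * mat_star q A - 1\<^sub>m m)"
    unfolding graph_mat_def infinity_mat_def
    by (rule minus_four_block_mat) (use A sA AsA in auto)
  also have "\<dots> = four_block_mat (1\<^sub>m m) (mat_star q A) A (A * mat_star q A - 1\<^sub>m m)"
    using A sA by (simp add: minus_zero_mat)
  also have "det \<dots> = det (A * mat_star q A - 1\<^sub>m m - A * mat_star q A)"
    using sA A minus_carrier_mat[OF one_carrier_mat]
    by (intro det_four_block_mat_one_upper_left) simp_all
  also have "A * mat_star q A - 1\<^sub>m m - A * mat_star q A = - 1\<^sub>m m"
    using AsA by (rule minus_one_minus_self_mat)
  finally show ?thesis
    by (simp add: det_uminus_one_mat)
qed

lemma is_d_code_graph_mats:
  assumes Z: "Z \<subseteq> carrier_mat m m"
    and nonsingular: "\<forall>A\<in>Z. \<forall>B\<in>Z. A \<noteq> B \<longrightarrow> det (A - B) \<noteq> 0"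
  shows "is_d_code (m + m) q (m + m) (graph_mat q m ` Z \<union> {infinity_mat m} :: 'a mat set)"
proof -
  let ?Y = "graph_mat q m ` Z \<union> {infinity_mat m} :: 'a mat set"
  have carrier: "?Y \<subseteq> carrier_mat (m + m) (m + m)"
    using Z by (auto simp: graph_mat_carrier infinity_mat_carrier)
  have "?Y \<subseteq> herm_X (m + m) q"
    using Z carrier by (auto simp: herm_X_def graph_mat_hermitian infinity_mat_hermitian)
  moreover have det_ne: "det (M - N) \<noteq> 0" if "M \<in> ?Y" "N \<in> ?Y" "M \<noteq> N" for M N
  proof -
    from that consider A B where "A \<in> Z" "B \<in> Z" "A \<noteq> B" "M = graph_mat q m A" "N = graph_mat q m B"
      | A where "A \<in> Z" "M = graph_mat q m A" "N = infinity_mat m"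
      | A where "A \<in> Z" "M = infinity_mat m" "N = graph_mat q m A"
      by blast
    then show ?thesis
    proof cases
      case 1
      then have "det (A - B) \<noteq> 0"
        using nonsingular by blast
      moreover have "A \<in> carrier_mat m m" "B \<in> carrier_mat m m"
        using 1 Z by auto
      ultimately show ?thesis
        using 1 det_graph_mat_minus[of A m B] by auto
    next
      case 2
      then show ?thesis
        using det_graph_mat_minus_infinity_mat[of A m] Z by auto
    next
      case 3
      then have A: "A \<in> carrier_mat m m"
        using Z by blast
      have "M - N = - (N - M)"
        unfolding 3 by (rule minus_mat_eq_uminus_minus[OF infinity_mat_carrier graph_mat_carrier[OF A]])
      moreover have "N - M \<in> carrier_mat (m + m) (m + m)"
        unfolding 3 by (rule minus_carrier_mat[OF infinity_mat_carrier])
      moreover have "det (N - M) \<noteq> 0"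
        using 3 det_graph_mat_minus_infinity_mat[OF A] by simp
      ultimately show ?thesis
        using det_0_negate by metis
    qed
  qed
  moreover have "vec_space.rank (m + m) (M - N) = m + m" if "M \<in> ?Y" "N \<in> ?Y" "M \<noteq> N" for M N
  proof -
    have "M - N \<in> carrier_mat (m + m) (m + m)"
      using carrier that(2) by (blast intro: minus_carrier_mat)
    then show ?thesis
      using det_ne[OF that] vec_space.det_rank_iff by blast
  qed
  ultimately show ?thesis
    unfolding is_d_code_def by auto
qed

end

theorem theorem4p3:
  fixes Z :: "'a::{finite,field} mat set" and q n :: nat
  assumes "prime_power q"
    and "card (UNIV :: 'a set) = q ^ 2"
    and "even n" and "0 < n"
    and "Z \<subseteq> carrier_mat (n div 2) (n div 2)"
    and "card Z = q ^ n"
    and "\<forall>A\<in>Z. \<forall>B\<in>Z. A \<noteq> B \<longrightarrow> det (A - B) \<noteq> 0"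
  shows "let m = n div 2;
             Y = (\<lambda>A. four_block_mat (1\<^sub>m m) (mat_star q A) A (A * mat_star q A)) ` Z
                 \<union> {four_block_mat (0\<^sub>m m m) (0\<^sub>m m m) (0\<^sub>m m m) (1\<^sub>m m)}
         in is_d_code n q n Y \<and> card Y = q ^ n + 1"
proof -
  interpret frobenius_involution "TYPE('a)" q
    using assms(1,2) by (rule frobenius_involution_if_card_eq_square)
  define m where "m = n div 2"
  have n: "n = m + m" and "0 < m"
    using assms(3,4) by (auto simp: m_def)
  have "q \<noteq> 0"
    using assms(2) finite_UNIV_card_ge_0[where 'a = 'a] by auto
  then have "finite Z"
    using assms(6) by (intro card_ge_0_finite) simp
  have Y: "(\<lambda>A. four_block_mat (1\<^sub>m m) (mat_star q A) A (A * mat_star q A)) ` Z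
      \<union> {four_block_mat (0\<^sub>m m m) (0\<^sub>m m m) (0\<^sub>m m m) (1\<^sub>m m)}
    = graph_mat q m ` Z \<union> {infinity_mat m}"
    by (simp add: graph_mat_def[abs_def] infinity_mat_def)
  show ?thesis
    unfolding Let_def m_def[symmetric] unfolding Y n
    using is_d_code_graph_mats[OF assms(5,7)[folded m_def]]
      card_graph_mats[OF \<open>finite Z\<close> assms(5)[folded m_def] \<open>0 < m\<close>] assms(6) n
    by simp
qed

end
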